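(* Let $q\ge2$, $m\ge0$. If $m\ge1$, fix a partition of $\mathbb{Z}_q^m$ into $q$ distance-$2$ MDS codes $M^1,\dots,M^q$ of $H(m,q)$. For $0\le t\le q$ and $1\le i\le q$, let $G^i_t$ be the map $\mathbb{Z}_q^m\to\{1,2\}$ equal to $1$ exactly on $\bigcup_{j=i}^{i+t-1}M^j$ (indices taken cyclically in $\{1,\dots,q\}$) if $m\ge1$; if $m=0$ ($H(0,q)$ is a single vertex), $G^i_t$ gives that vertex color $1$ if $1\le i\le t$ and color $2$ if $t<i\le q$. Let $\mathbf{l}$ denote the constant map $\mathbb{Z}_q^m\to\{l\}$. (1) Let $f$ be a perfect $(q+1)$-coloring of $H(n,q)$ with quotient matrix whose entries are: $s_{i,i}=\alpha'$ and $s_{i,j}=\alpha$ for $1\le i\ne j\le q$; $s_{i,q+1}=\beta$ for $i\le q$; $s_{q+1,j}=\gamma$ for $j\le q$; $s_{q+1,q+1}=\delta$. If $m=\gamma-\alpha\ge0$, then for every $t\in\{0,\dots,q\}$ and $l\in\{1,2\}$ with $t(l-1)+(q-t)(2-l)\ne0$, the invasion $h_l=f\times(G^1_t,\dots,G^q_t,\mathbf{l})$ is a $(b_l,c_l)$-coloring of $H(n+m,q)$ with $b_l=\gamma(q-t)+\beta(l-1)$ and $c_l=\gamma t+\beta(2-l)$. (2) Let $f$ be a perfect $2q$-coloring of $H(n,q)$ with quotient matrix $(s_{i,j})$ where $s_{i,j}=\alpha$ for $i,j\le q$; $s_{i,j}=\beta$ for $i\le q<j$; $s_{i,j}=\gamma$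 for $j\le q<i$; $s_{i,j}=\delta$ for $i,j>q$. If $m=\gamma-\alpha=\beta-\delta\ge0$, then for all $t_1,t_2\in\{0,\dots,q\}$ with $t_1+t_2\notin\{0,2q\}$ the invasion $h=f\times(G^1_{t_1},\dots,G^q_{t_1},G^1_{t_2},\dots,G^q_{t_2})$ is a $(b,c)$-coloring of $H(n+m,q)$ with $b=q(\gamma+\beta)-\gamma t_1-\beta t_2$ and $c=\gamma t_1+\beta t_2$.
   Context: The Hamming graph $H(n,q)$ has vertex set $\mathbb{Z}_q^n$, two vertices adjacent iff they differ in exactly one coordinate. A perfect $k$-coloring is a surjective map from the vertex set onto $\{1,\dots,k\}$ such that every vertex of color $i$ has exactly $s_{i,j}$ neighbours of color $j$; $(s_{i,j})$ is its quotient matrix. A $(b,c)$-coloring of $H(N,q)$ is a perfect $2$-coloring in which each color-1 vertex has exactly $b$ neighbours of color 2 and each color-2 vertex has exactly $c$ neighbours of color 1. A distance-$2$ MDS code in $H(m,q)$ is a set of $q^{m-1}$ vertices with pairwise Hamming distance at least $2$. Given a $k$-coloring $f$ of $H(n,q)$ and maps $g_1,\dots,g_k:\mathbb{Z}_q^m\to\{1,2\}$, the invasion $f\times(g_1,\dots,g_k)$ is the map on $\mathbb{Z}_q^{n+m}$ given by $(x,y)\mapsto g_{f(x)}(y)$ for $x\in\mathbb{Z}_q^n$, $y\in\mathbb{Z}_q^m$. *)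

theory Defs
  imports Main
begin

definition hverts :: "nat \<Rightarrow> nat \<Rightarrow> nat list set" where
  "hverts n q = {x. length x = n \<and> (\<forall>a\<in>set x. a < q)}"

definition hdist :: "nat list \<Rightarrow> nat list \<Rightarrow> nat" where
  "hdist x y = card {i. i < length x \<and> x ! i \<noteq> y ! i}"

definition perfect_coloring ::
  "nat \<Rightarrow> nat \<Rightarrow> nat \<Rightarrow> (nat list \<Rightarrow> nat) \<Rightarrow> (nat \<Rightarrow> nat \<Rightarrow> nat) \<Rightarrow> bool" where
  "perfect_coloring n q k f S \<longleftrightarrow>
     f ` hverts n q = {1..k} \<and>
     (\<forall>x\<in>hverts n q. \<forall>j\<in>{1..k}.
        card {y\<in>hverts n q. hdist x y = 1 \<and> f y = j} = S (f x) j)"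

definition bc_coloring ::
  "nat \<Rightarrow> nat \<Rightarrow> (nat list \<Rightarrow> nat) \<Rightarrow> nat \<Rightarrow> nat \<Rightarrow> bool" where
  "bc_coloring N q h b c \<longleftrightarrow>
     (\<exists>S. perfect_coloring N q 2 h S \<and> S 1 2 = b \<and> S 2 1 = c)"

definition mds2_code :: "nat \<Rightarrow> nat \<Rightarrow> nat list set \<Rightarrow> bool" where
  "mds2_code m q C \<longleftrightarrow> C \<subseteq> hverts m q \<and> card C = q ^ (m - 1) \<and>
     (\<forall>x\<in>C. \<forall>y\<in>C. x \<noteq> y \<longrightarrow> hdist x y \<ge> 2)"

definition mds2_partition :: "nat \<Rightarrow> nat \<Rightarrow> (nat \<Rightarrow> nat list set) \<Rightarrow> bool" where
  "mds2_partition m q M \<longleftrightarrow>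
     (\<forall>j\<in>{1..q}. mds2_code m q (M j)) \<and>
     (\<forall>i\<in>{1..q}. \<forall>j\<in>{1..q}. i \<noteq> j \<longrightarrow> M i \<inter> M j = {}) \<and>
     (\<Union>j\<in>{1..q}. M j) = hverts m q"

definition Gmap :: "nat \<Rightarrow> nat \<Rightarrow> (nat \<Rightarrow> nat list set) \<Rightarrow> nat \<Rightarrow> nat \<Rightarrow> nat list \<Rightarrow> nat" where
  "Gmap m q M i t y =
     (if 1 \<le> m then
        (if y \<in> (\<Union>s\<in>{..<t}. M ((i + s - 1) mod q + 1)) then 1 else 2)
      else (if 1 \<le> i \<and> i \<le> t then 1 else 2))"

definition invasion :: "nat \<Rightarrow> (nat list \<Rightarrow> nat) \<Rightarrow> (nat \<Rightarrow> nat list \<Rightarrow> nat) \<Rightarrow> nat list \<Rightarrow> nat" where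
  "invasion n f g z = g (f (take n z)) (drop n z)"

end

theory Submission
  imports Defs
begin

text \<open>An edge of H(n+m,q) at (x,y) changes either x or y. Along the first kind, the number of
  colour changes of the invasion is read off the quotient matrix of f; along the second, only the
  single map g_{f(x)} matters. Every vertex outside a distance-2 MDS code of H(m,q) has exactly
  m neighbours in it; hence G^i_t changes colour at m(q-t) neighbours of a vertex of colour 1
  and at m t neighbours of a vertex of colour 2.
  Moreover each vertex lies in exactly t of the q cyclic windows, so exactly t of the maps
  G^1_t, ..., G^q_t give it colour 1. With m = gamma - alpha (and m = beta - delta) the two
  contributions add up to counts that no longer depend on f(x).\<close>

lemma hverts_conv_lists: "hverts n q = {xs. set xs \<subseteq> {..<q} \<and> length xs = n}"
  by (auto simp: hverts_def)

lemma finite_hverts: "finite (hverts n q)"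
  unfolding hverts_conv_lists by (rule finite_lists_length_eq) simp

lemma card_hverts: "card (hverts n q) = q ^ n"
  unfolding hverts_conv_lists by (subst card_lists_length_eq) simp_all

lemma append_in_hverts: "x \<in> hverts n q \<Longrightarrow> y \<in> hverts m q \<Longrightarrow> x @ y \<in> hverts (n + m) q"
  by (auto simp: hverts_def)

lemma take_drop_in_hverts:
  "z \<in> hverts (n + m) q \<Longrightarrow> take n z \<in> hverts n q \<and> drop n z \<in> hverts m q"
  by (auto simp: hverts_def dest: in_set_takeD in_set_dropD)

lemma hdist_conv_filter:
  "length x = length y \<Longrightarrow> hdist x y = length (filter (\<lambda>(a, b). a \<noteq> b) (zip x y))"
  unfolding hdist_def length_filter_conv_card
  by (auto intro!: arg_cong[where f = card])

lemma hdist_append: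
  "length x1 = length x2 \<Longrightarrow> length y1 = length y2 \<Longrightarrow>
   hdist (x1 @ y1) (x2 @ y2) = hdist x1 x2 + hdist y1 y2"
  by (simp add: hdist_conv_filter zip_append)

lemma hdist_eq_0_iff: "length x = length y \<Longrightarrow> hdist x y = 0 \<longleftrightarrow> x = y"
proof -
  assume l: "length x = length y"
  have "finite {i. i < length x \<and> x ! i \<noteq> y ! i}"
    by (rule finite_subset[of _ "{..<length x}"]) auto
  then have "hdist x y = 0 \<longleftrightarrow> (\<forall>i<length x. x ! i = y ! i)"
    by (auto simp: hdist_def)
  with l show ?thesis by (simp add: list_eq_iff_nth_eq)
qed

lemma hdist_self [simp]: "hdist x x = 0"
  using hdist_eq_0_iff by simp

lemma hdist_list_update:
  "i < length y \<Longrightarrow> hdist y (y[i := a]) = (if y ! i \<noteq> a then 1 else 0)"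
proof -
  assume i: "i < length y"
  have "{j. j < length y \<and> y ! j \<noteq> y[i := a] ! j} = (if y ! i \<noteq> a then {i} else {})"
    using i by (auto simp: nth_list_update)
  then show ?thesis by (simp add: hdist_def)
qed

lemma hdist_eq_1E:
  assumes l: "length z = length y" and h: "hdist y z = 1"
  obtains i where "i < length y" "z = y[i := z ! i]" "z ! i \<noteq> y ! i"
proof -
  from h obtain i where i: "{j. j < length y \<and> y ! j \<noteq> z ! j} = {i}"
    unfolding hdist_def by (rule card_1_singletonE)
  then have il: "i < length y" and ne: "y ! i \<noteq> z ! i" by auto
  have eq: "\<And>j. j < length y \<Longrightarrow> j \<noteq> i \<Longrightarrow> y ! j = z ! j"
    using i by blast
  have "z = y[i := z ! i]"
    by (rule nth_equalityI) (use l eq il in \<open>auto simp: nth_list_update\<close>)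
  with il ne show thesis by (intro that) auto
qed

lemma neighbours_conv_UN_update:
  assumes y: "y \<in> hverts m q"
  shows "{z\<in>hverts m q. hdist y z = 1 \<and> P z} =
     (\<Union>i<m. (\<lambda>a. y[i := a]) ` {a\<in>{..<q} - {y ! i}. P (y[i := a])})"
proof (intro equalityI subsetI)
  fix z assume "z \<in> {z\<in>hverts m q. hdist y z = 1 \<and> P z}"
  then have z: "z \<in> hverts m q" "hdist y z = 1" "P z" by auto
  moreover have "length z = length y" using z(1) y by (simp add: hverts_def)
  ultimately obtain i where i: "i < length y" "z = y[i := z ! i]" "z ! i \<noteq> y ! i"
    by (auto elim: hdist_eq_1E)
  have "z ! i < q" using z(1) i(1) y by (auto simp: hverts_def)
  then show "z \<in> (\<Union>i<m. (\<lambda>a. y[i := a]) ` {a\<in>{..<q} - {y ! i}. P (y[i := a])})"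
    using i z y by (auto simp: hverts_def intro!: image_eqI[where x = "z ! i"])
next
  fix z assume "z \<in> (\<Union>i<m. (\<lambda>a. y[i := a]) ` {a\<in>{..<q} - {y ! i}. P (y[i := a])})"
  then obtain i a where ia: "i < m" "a < q" "a \<noteq> y ! i" "P (y[i := a])" "z = y[i := a]"
    by auto
  have "z \<in> hverts m q"
    using ia y set_update_subset_insert[of y i a] by (auto simp: hverts_def)
  moreover have "hdist y z = 1"
    using ia y hdist_list_update[of i y a] by (auto simp: hverts_def)
  ultimately show "z \<in> {z\<in>hverts m q. hdist y z = 1 \<and> P z}" using ia by auto
qed

lemma card_neighbours_eq_sum:
  assumes y: "y \<in> hverts m q"
  shows "card {z\<in>hverts m q. hdist y z = 1 \<and> P z} =
     (\<Sum>i<m. card {a\<in>{..<q} - {y ! i}. P (y[i := a])})"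
proof -
  have ly: "length y = m" using y by (simp add: hverts_def)
  have inj: "inj_on (\<lambda>a. y[i := a]) A" if "i < m" for i A
    using that ly by (auto simp: inj_on_def dest: arg_cong[where f = "\<lambda>l. l ! i"])
  have "card (\<Union>i<m. (\<lambda>a. y[i := a]) ` {a\<in>{..<q} - {y ! i}. P (y[i := a])}) =
      (\<Sum>i<m. card ((\<lambda>a. y[i := a]) ` {a\<in>{..<q} - {y ! i}. P (y[i := a])}))"
  proof (rule card_UN_disjoint)
    show "\<forall>i\<in>{..<m}. \<forall>j\<in>{..<m}. i \<noteq> j \<longrightarrow>
      (\<lambda>a. y[i := a]) ` {a\<in>{..<q} - {y ! i}. P (y[i := a])} \<inter>
      (\<lambda>a. y[j := a]) ` {a\<in>{..<q} - {y ! j}. P (y[j := a])} = {}"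
      using ly by (auto simp: list_eq_iff_nth_eq nth_list_update split: if_splits)
  qed auto
  also have "\<dots> = (\<Sum>i<m. card {a\<in>{..<q} - {y ! i}. P (y[i := a])})"
    using inj by (intro sum.cong refl card_image) auto
  finally show ?thesis using neighbours_conv_UN_update[OF y] by simp
qed

lemma card_neighbours: "y \<in> hverts m q \<Longrightarrow> card {z\<in>hverts m q. hdist y z = 1} = m * (q - 1)"
proof -
  assume y: "y \<in> hverts m q"
  have "card {a\<in>{..<q} - {y ! i}. True} = q - 1" if "i < m" for i
  proof -
    have "y ! i < q" using y that by (auto simp: hverts_def)
    moreover have "{a\<in>{..<q} - {y ! i}. True} = {..<q} - {y ! i}" by auto
    ultimately show ?thesis by (simp add: card_Diff_singleton)
  qed
  then show ?thesis using card_neighbours_eq_sum[OF y, of "\<lambda>_. True"] by simp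
qed

lemma card_neighbours_append:
  assumes x: "x \<in> hverts n q" and y: "y \<in> hverts m q"
  shows "card {z\<in>hverts (n + m) q. hdist (x @ y) z = 1 \<and> P z} =
    card {x'\<in>hverts n q. hdist x x' = 1 \<and> P (x' @ y)} +
    card {y'\<in>hverts m q. hdist y y' = 1 \<and> P (x @ y')}"
proof -
  define A where "A = {x'\<in>hverts n q. hdist x x' = 1 \<and> P (x' @ y)}"
  define B where "B = {y'\<in>hverts m q. hdist y y' = 1 \<and> P (x @ y')}"
  have lx: "length x = n" and ly: "length y = m" using x y by (auto simp: hverts_def)
  have "{z\<in>hverts (n + m) q. hdist (x @ y) z = 1 \<and> P z} = (\<lambda>x'. x' @ y) ` A \<union> (\<lambda>y'. x @ y') ` B"
  proof (intro equalityI subsetI)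
    fix z assume z: "z \<in> {z\<in>hverts (n + m) q. hdist (x @ y) z = 1 \<and> P z}"
    define x' y' where "x' = take n z" and "y' = drop n z"
    have zz: "z = x' @ y'" unfolding x'_def y'_def by simp
    have hx: "x' \<in> hverts n q" and hy: "y' \<in> hverts m q"
      using z take_drop_in_hverts unfolding x'_def y'_def by auto
    then have lx': "length x' = n" and ly': "length y' = m" by (auto simp: hverts_def)
    have d: "hdist x x' + hdist y y' = 1"
      using z zz hdist_append[of x x' y y'] lx ly lx' ly' by simp
    show "z \<in> (\<lambda>x'. x' @ y) ` A \<union> (\<lambda>y'. x @ y') ` B"
    proof (cases "hdist y y' = 0")
      case True
      then have "y' = y" using hdist_eq_0_iff[of y y'] ly ly' by simp
      then show ?thesis using d True z zz hx unfolding A_def by auto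
    next
      case False
      then have "x' = x" using d hdist_eq_0_iff[of x x'] lx lx' by simp
      then show ?thesis using d False z zz hy unfolding B_def by auto
    qed
  next
    fix z assume "z \<in> (\<lambda>x'. x' @ y) ` A \<union> (\<lambda>y'. x @ y') ` B"
    then show "z \<in> {z\<in>hverts (n + m) q. hdist (x @ y) z = 1 \<and> P z}"
      using x y lx ly hdist_append[of x _ y y] hdist_append[of x x y]
      unfolding A_def B_def by (auto simp: hverts_def)
  qed
  moreover have "(\<lambda>x'. x' @ y) ` A \<inter> (\<lambda>y'. x @ y') ` B = {}"
    using lx unfolding A_def B_def by (auto simp: hverts_def)
  moreover have "finite A" "finite B" unfolding A_def B_def using finite_hverts by auto
  ultimately show ?thesis
    unfolding A_def[symmetric] B_def[symmetric]
    by (simp add: card_Un_disjoint card_image inj_on_def)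
qed

lemma bc_coloringI:
  assumes onto: "h ` hverts N q = {1, 2}"
    and switch: "\<And>z. z \<in> hverts N q \<Longrightarrow>
      card {z'\<in>hverts N q. hdist z z' = 1 \<and> h z' \<noteq> h z} = (if h z = 1 then b else c)"
  shows "bc_coloring N q h b c"
proof -
  define S where "S = (\<lambda>a a'. if a = a' then N * (q - 1) - (if a = (1::nat) then b else c)
                               else (if a = 1 then b else c))"
  have "card {z'\<in>hverts N q. hdist z z' = 1 \<and> h z' = a} = S (h z) a"
    if z: "z \<in> hverts N q" and a: "a \<in> {1..2}" for z a
  proof (cases "a = h z")
    case True
    have "{z'\<in>hverts N q. hdist z z' = 1} =
        {z'\<in>hverts N q. hdist z z' = 1 \<and> h z' = h z} \<union> {z'\<in>hverts N q. hdist z z' = 1 \<and> h z' \<noteq> h z}"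
      by auto
    then have "card {z'\<in>hverts N q. hdist z z' = 1} =
        card {z'\<in>hverts N q. hdist z z' = 1 \<and> h z' = h z} + card {z'\<in>hverts N q. hdist z z' = 1 \<and> h z' \<noteq> h z}"
      using finite_hverts by (simp add: card_Un_disjoint disjoint_iff)
    then show ?thesis using card_neighbours[OF z] switch[OF z] True unfolding S_def by simp
  next
    case False
    have "h z \<in> {1, 2}" "\<forall>z'\<in>hverts N q. h z' \<in> {1, 2}" "a \<in> {1, 2}"
      using onto z a by auto
    then have "{z'\<in>hverts N q. hdist z z' = 1 \<and> h z' = a} = {z'\<in>hverts N q. hdist z z' = 1 \<and> h z' \<noteq> h z}"
      using False by fastforce
    then show ?thesis using switch[OF z] False unfolding S_def by simp
  qed
  moreover have "{1..2::nat} = {1, 2}" by auto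
  ultimately have "perfect_coloring N q 2 h S" using onto by (simp add: perfect_coloring_def)
  then show ?thesis unfolding bc_coloring_def S_def by auto
qed

lemma card_neighbours_perfect_coloring:
  assumes "perfect_coloring n q K f S" and x: "x \<in> hverts n q"
  shows "card {x'\<in>hverts n q. hdist x x' = 1 \<and> P (f x')} = (\<Sum>j\<in>{1..K}. if P j then S (f x) j else 0)"
proof -
  have f: "f ` hverts n q = {1..K}"
    and S: "\<And>j. j \<in> {1..K} \<Longrightarrow> card {x'\<in>hverts n q. hdist x x' = 1 \<and> f x' = j} = S (f x) j"
    using assms by (auto simp: perfect_coloring_def)
  have "{x'\<in>hverts n q. hdist x x' = 1 \<and> P (f x')} =
      (\<Union>j\<in>{j\<in>{1..K}. P j}. {x'\<in>hverts n q. hdist x x' = 1 \<and> f x' = j})"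
    using f by auto
  also have "card \<dots> = (\<Sum>j\<in>{j\<in>{1..K}. P j}. card {x'\<in>hverts n q. hdist x x' = 1 \<and> f x' = j})"
    by (rule card_UN_disjoint) (use finite_hverts in auto)
  also have "\<dots> = (\<Sum>j\<in>{j\<in>{1..K}. P j}. S (f x) j)"
    using S by (intro sum.cong) auto
  also have "\<dots> = (\<Sum>j\<in>{1..K}. if P j then S (f x) j else 0)"
    by (rule sum.inter_filter) simp
  finally show ?thesis .
qed

lemma card_neighbours_invasion:
  assumes pc: "perfect_coloring n q K f S" and x: "x \<in> hverts n q" and y: "y \<in> hverts m q"
  shows "card {z\<in>hverts (n + m) q. hdist (x @ y) z = 1 \<and> invasion n f g z \<noteq> invasion n f g (x @ y)} =
    (\<Sum>j\<in>{1..K}. if g j y \<noteq> g (f x) y then S (f x) j else 0) +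
    card {y'\<in>hverts m q. hdist y y' = 1 \<and> g (f x) y' \<noteq> g (f x) y}"
proof -
  have inv: "\<And>x' y'. x' \<in> hverts n q \<Longrightarrow> invasion n f g (x' @ y') = g (f x') y'"
    by (simp add: invasion_def hverts_def)
  have "card {x'\<in>hverts n q. hdist x x' = 1 \<and> invasion n f g (x' @ y) \<noteq> invasion n f g (x @ y)} =
      card {x'\<in>hverts n q. hdist x x' = 1 \<and> g (f x') y \<noteq> g (f x) y}"
    using inv x by (intro arg_cong[where f = card]) auto
  then show ?thesis
    using card_neighbours_append[OF x y] card_neighbours_perfect_coloring[OF pc x, of "\<lambda>j. g j y \<noteq> g (f x) y"]
    by (simp add: inv[OF x])
qed

lemma invasion_bc_coloring:
  assumes pc: "perfect_coloring n q K f S"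
    and colours: "\<And>k y. k \<in> {1..K} \<Longrightarrow> y \<in> hverts m q \<Longrightarrow> g k y \<in> {1, 2}"
    and switch: "\<And>k y. k \<in> {1..K} \<Longrightarrow> y \<in> hverts m q \<Longrightarrow>
       (\<Sum>j\<in>{1..K}. if g j y \<noteq> g k y then S k j else 0) +
       card {y'\<in>hverts m q. hdist y y' = 1 \<and> g k y' \<noteq> g k y} = (if g k y = 1 then b else c)"
    and attains: "\<And>a. a \<in> {1, 2} \<Longrightarrow> \<exists>k\<in>{1..K}. \<exists>y\<in>hverts m q. g k y = a"
  shows "bc_coloring (n + m) q (invasion n f g) b c"
proof (rule bc_coloringI)
  have f: "f ` hverts n q = {1..K}" using pc by (simp add: perfect_coloring_def)
  have inv: "\<And>x y. x \<in> hverts n q \<Longrightarrow> invasion n f g (x @ y) = g (f x) y"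
    by (simp add: invasion_def hverts_def)
  show "invasion n f g ` hverts (n + m) q = {1, 2}"
  proof (intro equalityI subsetI)
    fix a assume "a \<in> invasion n f g ` hverts (n + m) q"
    then obtain z where z: "z \<in> hverts (n + m) q" "a = g (f (take n z)) (drop n z)"
      by (auto simp: invasion_def)
    then show "a \<in> {1, 2}" using take_drop_in_hverts[OF z(1)] colours f by blast
  next
    fix a :: nat assume "a \<in> {1, 2}"
    then obtain k y where "k \<in> {1..K}" "y \<in> hverts m q" "g k y = a" using attains by blast
    moreover obtain x where "x \<in> hverts n q" "f x = k" using \<open>k \<in> {1..K}\<close> f by (metis imageE)
    ultimately show "a \<in> invasion n f g ` hverts (n + m) q"
      using inv append_in_hverts by (intro image_eqI[where x = "x @ y"]) auto
  qed
  fix z assume "z \<in> hverts (n + m) q"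
  then obtain x y where x: "x \<in> hverts n q" and y: "y \<in> hverts m q" and z: "z = x @ y"
    using take_drop_in_hverts append_take_drop_id by metis
  have "f x \<in> {1..K}" using f x by blast
  then show "card {z'\<in>hverts (n + m) q. hdist z z' = 1 \<and> invasion n f g z' \<noteq> invasion n f g z} =
      (if invasion n f g z = 1 then b else c)"
    using card_neighbours_invasion[OF pc x y, of g] switch[OF _ y] by (simp add: z inv[OF x])
qed

definition puncture :: "nat \<Rightarrow> nat list \<Rightarrow> nat list" where
  "puncture i z = take i z @ drop (Suc i) z"

lemma puncture_eq_imp_update:
  assumes "length a = length b" and "i < length a" and "puncture i a = puncture i b"
  shows "b = a[i := b ! i]"
proof -
  have "take i a = take i b \<and> drop (Suc i) a = drop (Suc i) b"
    using assms unfolding puncture_def by (subst (asm) append_eq_append_conv) auto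
  then show ?thesis
    using id_take_nth_drop[of i b] upd_conv_take_nth_drop[of i a "b ! i"] assms by simp
qed

lemma puncture_in_hverts: "z \<in> hverts m q \<Longrightarrow> i < m \<Longrightarrow> puncture i z \<in> hverts (m - 1) q"
  by (auto simp: hverts_def puncture_def dest: in_set_takeD in_set_dropD)

text \<open>Puncturing a distance-2 MDS code in any coordinate is injective, hence by counting a
  bijection onto H(m-1,q): every line of H(m,q) meets the code exactly once.\<close>
lemma mds2_code_meets_line:
  assumes C: "mds2_code m q C" and y: "y \<in> hverts m q" and i: "i < m"
  shows "card {a\<in>{..<q}. y[i := a] \<in> C} = 1"
proof -
  have Csub: "C \<subseteq> hverts m q" and cardC: "card C = q ^ (m - 1)"
    and dist: "\<And>x z. x \<in> C \<Longrightarrow> z \<in> C \<Longrightarrow> x \<noteq> z \<Longrightarrow> hdist x z \<ge> 2"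
    using C by (auto simp: mds2_code_def)
  have ly: "length y = m" using y by (simp add: hverts_def)
  have inj: "inj_on (puncture i) C"
  proof (rule inj_onI)
    fix c c' assume c: "c \<in> C" "c' \<in> C" "puncture i c = puncture i c'"
    have lc: "length c = m" "length c' = m" using c Csub by (auto simp: hverts_def)
    have e: "c' = c[i := c' ! i]" using puncture_eq_imp_update[of c c' i] c lc i by simp
    have "hdist c c' \<le> 1" using hdist_list_update[of i c "c' ! i"] lc i e by simp
    then show "c = c'" using dist[OF c(1) c(2)] by fastforce
  qed
  have "puncture i ` C = hverts (m - 1) q"
  proof (rule card_subset_eq[OF finite_hverts])
    show "puncture i ` C \<subseteq> hverts (m - 1) q" using Csub puncture_in_hverts i by blast
    show "card (puncture i ` C) = card (hverts (m - 1) q)"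
      using card_image[OF inj] cardC card_hverts by simp
  qed
  then obtain c where c: "c \<in> C" "puncture i c = puncture i y"
    using puncture_in_hverts[OF y i] by (metis imageE)
  have lc: "length c = m" using c Csub by (auto simp: hverts_def)
  have ce: "c = y[i := c ! i]" using puncture_eq_imp_update[of y c i] c lc ly i by simp
  have cq: "c ! i < q" using c Csub lc i by (auto simp: hverts_def)
  have "{a\<in>{..<q}. y[i := a] \<in> C} = {c ! i}"
  proof (intro equalityI subsetI)
    fix a assume a: "a \<in> {a\<in>{..<q}. y[i := a] \<in> C}"
    show "a \<in> {c ! i}"
    proof (rule ccontr)
      assume ne: "a \<notin> {c ! i}"
      have "hdist (y[i := a]) ((y[i := a])[i := c ! i]) = 1"
        using hdist_list_update[of i "y[i := a]" "c ! i"] ne ly i by simp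
      moreover have "y[i := a] \<noteq> c"
        using ne ly i by (metis nth_list_update_eq singletonI)
      ultimately show False using dist[of "y[i := a]" c] a c ce by auto
    qed
  next
    fix a assume "a \<in> {c ! i}"
    then show "a \<in> {a\<in>{..<q}. y[i := a] \<in> C}" using cq c ce by auto
  qed
  then show ?thesis by simp
qed

lemma card_neighbours_in_mds2_code:
  assumes C: "mds2_code m q C" and y: "y \<in> hverts m q" and yC: "y \<notin> C"
  shows "card {z\<in>hverts m q. hdist y z = 1 \<and> z \<in> C} = m"
proof -
  have "card {a\<in>{..<q} - {y ! i}. y[i := a] \<in> C} = 1" if "i < m" for i
  proof -
    have "{a\<in>{..<q} - {y ! i}. y[i := a] \<in> C} = {a\<in>{..<q}. y[i := a] \<in> C}"
      using yC by auto
    then show ?thesis using mds2_code_meets_line[OF C y that] by simp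
  qed
  then show ?thesis using card_neighbours_eq_sum[OF y] by simp
qed

lemma mds2_partitionE:
  assumes "mds2_partition m q M" and "y \<in> hverts m q"
  obtains j where "j \<in> {1..q}" "y \<in> M j"
  using assms unfolding mds2_partition_def by blast

lemma mds2_partition_disjoint:
  "mds2_partition m q M \<Longrightarrow> i \<in> {1..q} \<Longrightarrow> j \<in> {1..q} \<Longrightarrow> i \<noteq> j \<Longrightarrow> M i \<inter> M j = {}"
  unfolding mds2_partition_def by blast

lemma mds2_partition_mem_UN_iff:
  "mds2_partition m q M \<Longrightarrow> j \<in> {1..q} \<Longrightarrow> y \<in> M j \<Longrightarrow> W \<subseteq> {1..q} \<Longrightarrow>
   y \<in> (\<Union>k\<in>W. M k) \<longleftrightarrow> j \<in> W"
  using mds2_partition_disjoint[of m q M j] by blast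

lemma card_neighbours_in_mds2_classes:
  assumes P: "mds2_partition m q M" and y: "y \<in> hverts m q"
    and j: "j \<in> {1..q}" "y \<in> M j" and W: "W \<subseteq> {1..q}" "j \<notin> W"
  shows "card {z\<in>hverts m q. hdist y z = 1 \<and> z \<in> (\<Union>k\<in>W. M k)} = m * card W"
proof -
  have codes: "\<And>k. k \<in> {1..q} \<Longrightarrow> mds2_code m q (M k)"
    using P by (simp add: mds2_partition_def)
  note disj = mds2_partition_disjoint[OF P]
  have "finite W" using W finite_subset by blast
  have "{z\<in>hverts m q. hdist y z = 1 \<and> z \<in> (\<Union>k\<in>W. M k)} =
        (\<Union>k\<in>W. {z\<in>hverts m q. hdist y z = 1 \<and> z \<in> M k})" by auto
  also have "card \<dots> = (\<Sum>k\<in>W. card {z\<in>hverts m q. hdist y z = 1 \<and> z \<in> M k})"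
  proof (rule card_UN_disjoint)
    show "\<forall>k\<in>W. \<forall>k'\<in>W. k \<noteq> k' \<longrightarrow> {z\<in>hverts m q. hdist y z = 1 \<and> z \<in> M k} \<inter>
        {z\<in>hverts m q. hdist y z = 1 \<and> z \<in> M k'} = {}"
      using disj W by blast
  qed (use \<open>finite W\<close> finite_hverts in auto)
  also have "\<dots> = (\<Sum>k\<in>W. m)"
  proof (rule sum.cong[OF refl])
    fix k assume k: "k \<in> W"
    then have "y \<notin> M k" using disj[of j k] j W by blast
    then show "card {z\<in>hverts m q. hdist y z = 1 \<and> z \<in> M k} = m"
      using card_neighbours_in_mds2_code[OF codes y] k W by auto
  qed
  finally show ?thesis by simp
qed

definition window :: "nat \<Rightarrow> nat \<Rightarrow> nat \<Rightarrow> nat set" where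
  "window q i t = (\<lambda>s. (i + s - 1) mod q + 1) ` {..<t}"

lemma mod_eq_if_less_double: "(a::nat) < 2 * q \<Longrightarrow> a mod q = (if a < q then a else a - q)"
  by (simp add: le_mod_geq)

lemma window_subset: "1 \<le> q \<Longrightarrow> window q i t \<subseteq> {1..q}"
  by (auto simp: window_def Suc_le_eq)

lemma card_window:
  assumes i: "i \<in> {1..q}" and t: "t \<le> q"
  shows "card (window q i t) = t"
proof -
  have "inj_on (\<lambda>s. (i + s - 1) mod q + 1) {..<t}"
  proof (rule inj_onI)
    fix s s' assume s: "s \<in> {..<t}" "s' \<in> {..<t}" "(i + s - 1) mod q + 1 = (i + s' - 1) mod q + 1"
    have "i + s - 1 < 2 * q" "i + s' - 1 < 2 * q" using s i t by auto
    then show "s = s'" using s i t by (simp add: mod_eq_if_less_double split: if_splits)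
  qed
  then show ?thesis by (simp add: window_def card_image)
qed

lemma mem_window_iff:
  assumes i: "i \<in> {1..q}" and j: "j \<in> {1..q}" and t: "t \<le> q"
  shows "j \<in> window q i t \<longleftrightarrow> (if i \<le> j then j - i else j + q - i) < t"
proof
  assume "j \<in> window q i t"
  then obtain s where s: "s < t" "j = (i + s - 1) mod q + 1" by (auto simp: window_def)
  have "i + s - 1 < 2 * q" using s i t by auto
  then show "(if i \<le> j then j - i else j + q - i) < t"
    using s i j t by (simp add: mod_eq_if_less_double split: if_splits)
next
  define s where "s = (if i \<le> j then j - i else j + q - i)"
  assume "s < t"
  have "i + s - 1 < 2 * q" using s_def i j t by auto
  then have "j = (i + s - 1) mod q + 1"
    using s_def i j by (simp add: mod_eq_if_less_double split: if_splits; arith)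
  with \<open>s < t\<close> show "j \<in> window q i t" by (auto simp: window_def)
qed

lemma card_windows_containing:
  assumes j: "j \<in> {1..q}" and t: "t \<le> q"
  shows "card {i\<in>{1..q}. j \<in> window q i t} = t"
proof -
  define \<psi> where "\<psi> = (\<lambda>i. if i \<le> j then j - i else j + q - i)"
  have inj: "inj_on \<psi> {1..q}" using j unfolding \<psi>_def by (auto simp: inj_on_def split: if_splits)
  have im: "\<psi> ` {1..q} = {..<q}"
  proof (rule card_subset_eq)
    show "\<psi> ` {1..q} \<subseteq> {..<q}" using j unfolding \<psi>_def by auto
    show "card (\<psi> ` {1..q}) = card {..<q}" using card_image[OF inj] by simp
  qed simp
  have "\<psi> ` {i\<in>{1..q}. \<psi> i < t} = {..<t}"
  proof (intro equalityI subsetI)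
    fix s assume "s \<in> {..<t}"
    then have "s \<in> \<psi> ` {1..q}" using im t by auto
    then show "s \<in> \<psi> ` {i\<in>{1..q}. \<psi> i < t}" using \<open>s \<in> {..<t}\<close> by auto
  qed auto
  moreover have "card (\<psi> ` {i\<in>{1..q}. \<psi> i < t}) = card {i\<in>{1..q}. \<psi> i < t}"
    by (rule card_image) (rule inj_on_subset[OF inj], auto)
  moreover have "{i\<in>{1..q}. j \<in> window q i t} = {i\<in>{1..q}. \<psi> i < t}"
    using mem_window_iff[OF _ j t] unfolding \<psi>_def by auto
  ultimately show ?thesis by simp
qed

lemma Gmap_in_12: "Gmap m q M i t y \<in> {1, 2}"
  by (simp add: Gmap_def)

lemma Gmap_eq_window:
  "1 \<le> m \<Longrightarrow> Gmap m q M i t y = (if y \<in> (\<Union>k\<in>window q i t. M k) then 1 else 2)"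
  by (simp add: Gmap_def window_def)

lemma sum_atLeastAtMost_double:
  fixes F :: "nat \<Rightarrow> 'a::comm_monoid_add"
  shows "(\<Sum>j\<in>{1..2 * q}. F j) = (\<Sum>j\<in>{1..q}. F j) + (\<Sum>j\<in>{1..q}. F (j + q))"
proof -
  have "(\<Sum>j\<in>{1..2 * q}. F j) = (\<Sum>j\<in>{1..q}. F j) + (\<Sum>j\<in>{q + 1..q + q}. F j)"
    unfolding mult_2 by (rule sum.ub_add_nat) simp
  also have "(\<Sum>j\<in>{q + 1..q + q}. F j) = (\<Sum>j\<in>{1..q}. F (j + q))"
    using sum.shift_bounds_cl_nat_ivl[of F 1 q q] by (simp add: add.commute)
  finally show ?thesis .
qed

context
  fixes q m :: nat and M :: "nat \<Rightarrow> nat list set"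
  assumes q2: "q \<ge> 2" and part: "1 \<le> m \<Longrightarrow> mds2_partition m q M"
begin

lemma card_Gmap_eq_1:
  assumes t: "t \<le> q" and y: "y \<in> hverts m q"
  shows "card {i\<in>{1..q}. Gmap m q M i t y = 1} = t"
proof (cases "1 \<le> m")
  case False
  then have "{i\<in>{1..q}. Gmap m q M i t y = 1} = {1..t}" using t by (auto simp: Gmap_def)
  then show ?thesis by simp
next
  case True
  note P = part[OF True]
  obtain j where j: "j \<in> {1..q}" "y \<in> M j" using mds2_partitionE[OF P y] .
  have "Gmap m q M i t y = 1 \<longleftrightarrow> j \<in> window q i t" if "i \<in> {1..q}" for i
    using Gmap_eq_window[OF True] mds2_partition_mem_UN_iff[OF P j window_subset] q2 by simp
  then have "{i\<in>{1..q}. Gmap m q M i t y = 1} = {i\<in>{1..q}. j \<in> window q i t}" by blast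
  then show ?thesis using card_windows_containing[OF j(1) t] by simp
qed

lemma sum_Gmap_neq:
  assumes t: "t \<le> q" and y: "y \<in> hverts m q" and a: "a \<in> {1, 2}"
  shows "(\<Sum>j\<in>{1..q}. if Gmap m q M j t y \<noteq> a then w else 0) = w * (if a = 1 then q - t else t)"
proof -
  have "(\<Sum>j\<in>{1..q}. if Gmap m q M j t y \<noteq> a then w else 0) = w * card {j\<in>{1..q}. Gmap m q M j t y \<noteq> a}"
    by (simp add: sum.inter_filter[symmetric])
  moreover have "{j\<in>{1..q}. Gmap m q M j t y \<noteq> a} =
      (if a = 1 then {1..q} - {j\<in>{1..q}. Gmap m q M j t y = 1} else {j\<in>{1..q}. Gmap m q M j t y = 1})"
    using a Gmap_in_12[of m q M _ t y] by auto
  moreover have "card ({1..q} - {j\<in>{1..q}. Gmap m q M j t y = 1}) = q - t"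
    using card_Gmap_eq_1[OF t y] by (subst card_Diff_subset) auto
  ultimately show ?thesis using card_Gmap_eq_1[OF t y] by simp
qed

lemma Gmap_attains:
  assumes t: "t \<le> q" and a: "a \<in> {1, 2}" and nontrivial: "if a = 1 then 0 < t else t < q"
  shows "\<exists>i\<in>{1..q}. \<exists>y\<in>hverts m q. Gmap m q M i t y = a"
proof -
  define y0 where "y0 = replicate m (0::nat)"
  have y0: "y0 \<in> hverts m q" using q2 by (simp add: y0_def hverts_def)
  have c: "card {i\<in>{1..q}. Gmap m q M i t y0 = 1} = t" by (rule card_Gmap_eq_1[OF t y0])
  have "{i\<in>{1..q}. Gmap m q M i t y0 = a} \<noteq> {}"
  proof (cases "a = 1")
    case True
    then have "0 < t" using nontrivial by simp
    have "{i\<in>{1..q}. Gmap m q M i t y0 = 1} \<noteq> {}"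
    proof
      assume "{i\<in>{1..q}. Gmap m q M i t y0 = 1} = {}"
      then have "t = 0" using c by (simp only: card.empty)
      with \<open>0 < t\<close> show False by simp
    qed
    then show ?thesis using True by simp
  next
    case False
    then have "{i\<in>{1..q}. Gmap m q M i t y0 = 1} \<noteq> {1..q}" using c nontrivial by auto
    then obtain i where "i \<in> {1..q}" "Gmap m q M i t y0 \<noteq> 1" by blast
    then show ?thesis using False a Gmap_in_12[of m q M i t y0] by auto
  qed
  then show ?thesis using y0 by blast
qed

lemma card_neighbours_Gmap_switch:
  assumes t: "t \<le> q" and y: "y \<in> hverts m q" and i: "i \<in> {1..q}"
  shows "card {z\<in>hverts m q. hdist y z = 1 \<and> Gmap m q M i t z \<noteq> Gmap m q M i t y}
     = m * (if Gmap m q M i t y = 1 then q - t else t)"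
proof (cases "1 \<le> m")
  case False
  then have "{z\<in>hverts m q. hdist y z = 1 \<and> Gmap m q M i t z \<noteq> Gmap m q M i t y} = {}"
    using y by (auto simp: hverts_def hdist_def)
  then show ?thesis using False by (simp only: card.empty) simp
next
  case True
  note P = part[OF True]
  obtain j where j: "j \<in> {1..q}" "y \<in> M j" using mds2_partitionE[OF P y] .
  define W where "W = window q i t"
  have W: "W \<subseteq> {1..q}" unfolding W_def using window_subset q2 by simp
  have cW: "card W = t" unfolding W_def using card_window[OF i t] .
  have G: "\<And>z. Gmap m q M i t z = (if z \<in> (\<Union>k\<in>W. M k) then 1 else 2)"
    unfolding W_def by (rule Gmap_eq_window[OF True])
  have other: "z \<notin> (\<Union>k\<in>W. M k) \<longleftrightarrow> z \<in> (\<Union>k\<in>{1..q} - W. M k)" if z: "z \<in> hverts m q" for z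
  proof -
    obtain k where "k \<in> {1..q}" "z \<in> M k" using mds2_partitionE[OF P z] .
    then show ?thesis
      using mds2_partition_mem_UN_iff[OF P _ _ W] mds2_partition_mem_UN_iff[of m q M k z "{1..q} - W"] P
      by auto
  qed
  show ?thesis
  proof (cases "j \<in> W")
    case True
    have "y \<in> (\<Union>k\<in>W. M k)" using True j by blast
    then have "{z\<in>hverts m q. hdist y z = 1 \<and> Gmap m q M i t z \<noteq> Gmap m q M i t y}
        = {z\<in>hverts m q. hdist y z = 1 \<and> z \<in> (\<Union>k\<in>{1..q} - W. M k)}"
      using other unfolding G by auto
    also have "card \<dots> = m * card ({1..q} - W)"
      using True by (intro card_neighbours_in_mds2_classes[OF P y j]) auto
    finally show ?thesis using \<open>y \<in> (\<Union>k\<in>W. M k)\<close> cW W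
      by (simp add: G card_Diff_subset finite_subset)
  next
    case False
    then have yout: "y \<notin> (\<Union>k\<in>W. M k)" using mds2_partition_mem_UN_iff[OF P j W] by simp
    then have "{z\<in>hverts m q. hdist y z = 1 \<and> Gmap m q M i t z \<noteq> Gmap m q M i t y}
        = {z\<in>hverts m q. hdist y z = 1 \<and> z \<in> (\<Union>k\<in>W. M k)}"
      by (auto simp: G)
    also have "card \<dots> = m * card W"
      by (rule card_neighbours_in_mds2_classes[OF P y j W False])
    finally show ?thesis using yout cW by (simp add: G)
  qed
qed

lemma bc_coloring_invasion_q_plus_1:
  assumes pc: "perfect_coloring n q (q + 1) f S"
    and S: "\<forall>i\<in>{1..q}. \<forall>j\<in>{1..q}. i \<noteq> j \<longrightarrow> S i j = \<alpha>"
      "\<forall>i\<in>{1..q}. S i (q + 1) = \<beta>" "\<forall>j\<in>{1..q}. S (q + 1) j = \<gamma>"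
    and gam: "\<gamma> = \<alpha> + m"
    and t: "t \<le> q" and l: "l \<in> {1, 2}" and tl: "t * (l - 1) + (q - t) * (2 - l) \<noteq> 0"
  shows "bc_coloring (n + m) q (invasion n f (\<lambda>k. if k \<le> q then Gmap m q M k t else (\<lambda>y. l)))
    (\<gamma> * (q - t) + \<beta> * (l - 1)) (\<gamma> * t + \<beta> * (2 - l))"
proof (rule invasion_bc_coloring[OF pc])
  define g where "g = (\<lambda>k. if k \<le> q then Gmap m q M k t else (\<lambda>y::nat list. l))"
  fix k y assume k: "k \<in> {1..q + 1}" and y: "y \<in> hverts m q"
  define a where "a = g k y"
  have a: "a \<in> {1, 2}" using Gmap_in_12 l by (auto simp: g_def a_def)
  have sum_split: "(\<Sum>j\<in>{1..q + 1}. if g j y \<noteq> a then S k j else 0) =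
      (\<Sum>j\<in>{1..q}. if Gmap m q M j t y \<noteq> a then S k j else 0) + (if l \<noteq> a then S k (q + 1) else 0)"
    by (simp add: g_def)
  show "(\<Sum>j\<in>{1..q + 1}. if g j y \<noteq> g k y then S k j else 0) +
      card {y'\<in>hverts m q. hdist y y' = 1 \<and> g k y' \<noteq> g k y} =
      (if g k y = 1 then \<gamma> * (q - t) + \<beta> * (l - 1) else \<gamma> * t + \<beta> * (2 - l))"
  proof (cases "k \<le> q")
    case True
    have "(\<Sum>j\<in>{1..q}. if Gmap m q M j t y \<noteq> a then S k j else 0) =
        (\<Sum>j\<in>{1..q}. if Gmap m q M j t y \<noteq> a then \<alpha> else 0)"
    proof (rule sum.cong[OF refl])
      fix j assume "j \<in> {1..q}"
      then show "(if Gmap m q M j t y \<noteq> a then S k j else 0) = (if Gmap m q M j t y \<noteq> a then \<alpha> else 0)"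
        using S(1) k True by (cases "j = k") (auto simp: a_def g_def)
    qed
    moreover have "card {y'\<in>hverts m q. hdist y y' = 1 \<and> g k y' \<noteq> a} = m * (if a = 1 then q - t else t)"
      using card_neighbours_Gmap_switch[OF t y, of k] True k by (simp add: g_def a_def)
    moreover have "S k (q + 1) = \<beta>" using S(2) True k by simp
    ultimately show ?thesis
      using sum_split sum_Gmap_neq[OF t y a, of \<alpha>] a l unfolding gam a_def[symmetric]
      by (auto simp: algebra_simps)
  next
    case False
    then have "k = q + 1" "a = l" using k by (auto simp: a_def g_def)
    moreover have "(\<Sum>j\<in>{1..q}. if Gmap m q M j t y \<noteq> a then S k j else 0) =
        (\<Sum>j\<in>{1..q}. if Gmap m q M j t y \<noteq> a then \<gamma> else 0)"
      using S(3) \<open>k = q + 1\<close> by (intro sum.cong) auto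
    moreover have "{y'\<in>hverts m q. hdist y y' = 1 \<and> g k y' \<noteq> g k y} = {}"
      using False by (simp add: g_def)
    ultimately show ?thesis using sum_split sum_Gmap_neq[OF t y a] a
      unfolding a_def[symmetric] by (auto simp: g_def)
  qed
next
  fix a :: nat assume "a \<in> {1, 2}"
  show "\<exists>k\<in>{1..q + 1}. \<exists>y\<in>hverts m q. (if k \<le> q then Gmap m q M k t else (\<lambda>y. l)) y = a"
  proof (cases "a = l")
    case True
    have "replicate m 0 \<in> hverts m q" using q2 by (simp add: hverts_def)
    then show ?thesis using True by (intro bexI[where x = "q + 1"]) auto
  next
    case False
    then have "if a = 1 then 0 < t else t < q" using \<open>a \<in> {1, 2}\<close> l tl t by auto
    then show ?thesis using Gmap_attains[OF t \<open>a \<in> {1, 2}\<close>] by fastforce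
  qed
qed (use Gmap_in_12 l in auto)

lemma bc_coloring_invasion_2q:
  assumes pc: "perfect_coloring n q (2 * q) f S"
    and S: "\<forall>i\<in>{1..2*q}. \<forall>j\<in>{1..2*q}.
      S i j = (if i \<le> q then (if j \<le> q then \<alpha> else \<beta>) else (if j \<le> q then \<gamma> else \<delta>))"
    and gam: "\<gamma> = \<alpha> + m" and bet: "\<beta> = \<delta> + m"
    and t: "t1 \<le> q" "t2 \<le> q" and nontrivial: "t1 + t2 \<noteq> 0" "t1 + t2 \<noteq> 2 * q"
  shows "bc_coloring (n + m) q
    (invasion n f (\<lambda>k. if k \<le> q then Gmap m q M k t1 else Gmap m q M (k - q) t2))
    (q * (\<gamma> + \<beta>) - \<gamma> * t1 - \<beta> * t2) (\<gamma> * t1 + \<beta> * t2)"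
proof (rule invasion_bc_coloring[OF pc])
  define g where "g = (\<lambda>k. if k \<le> q then Gmap m q M k t1 else Gmap m q M (k - q) t2)"
  fix k y assume k: "k \<in> {1..2 * q}" and y: "y \<in> hverts m q"
  define a where "a = g k y"
  have a: "a \<in> {1, 2}" using Gmap_in_12 by (auto simp: g_def a_def)
  define A B where "A = (if k \<le> q then \<alpha> else \<gamma>)" and "B = (if k \<le> q then \<beta> else \<delta>)"
  have "(\<Sum>j\<in>{1..2 * q}. if g j y \<noteq> a then S k j else 0) =
      (\<Sum>j\<in>{1..q}. if Gmap m q M j t1 y \<noteq> a then A else 0) +
      (\<Sum>j\<in>{1..q}. if Gmap m q M j t2 y \<noteq> a then B else 0)"
    unfolding sum_atLeastAtMost_double
    using S k by (intro arg_cong2[where f = "(+)"] sum.cong) (auto simp: g_def A_def B_def)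
  also have "\<dots> = A * (if a = 1 then q - t1 else t1) + B * (if a = 1 then q - t2 else t2)"
    using sum_Gmap_neq[OF t(1) y a] sum_Gmap_neq[OF t(2) y a] by simp
  finally have x_part: "(\<Sum>j\<in>{1..2 * q}. if g j y \<noteq> a then S k j else 0) = \<dots>" .
  have y_part: "card {y'\<in>hverts m q. hdist y y' = 1 \<and> g k y' \<noteq> a} =
      m * (if a = 1 then q - (if k \<le> q then t1 else t2) else (if k \<le> q then t1 else t2))"
  proof (cases "k \<le> q")
    case True
    then show ?thesis using card_neighbours_Gmap_switch[OF t(1) y, of k] k by (simp add: g_def a_def)
  next
    case False
    then have "k - q \<in> {1..q}" using k by auto
    with False show ?thesis using card_neighbours_Gmap_switch[OF t(2) y] by (simp add: g_def a_def)
  qed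
  have "\<gamma> * (q - t1) + \<beta> * (q - t2) = q * (\<gamma> + \<beta>) - \<gamma> * t1 - \<beta> * t2"
    using t mult_le_mono2[OF t(1), of \<gamma>] mult_le_mono2[OF t(2), of \<beta>]
    by (simp add: diff_mult_distrib2 algebra_simps)
  then show "(\<Sum>j\<in>{1..2 * q}. if g j y \<noteq> g k y then S k j else 0) +
      card {y'\<in>hverts m q. hdist y y' = 1 \<and> g k y' \<noteq> g k y} =
      (if g k y = 1 then q * (\<gamma> + \<beta>) - \<gamma> * t1 - \<beta> * t2 else \<gamma> * t1 + \<beta> * t2)"
    using x_part y_part a unfolding a_def[symmetric] A_def B_def gam bet
    by (cases "k \<le> q") (auto simp: algebra_simps)
next
  fix a :: nat assume a: "a \<in> {1, 2}"
  show "\<exists>k\<in>{1..2 * q}. \<exists>y\<in>hverts m q.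
      (if k \<le> q then Gmap m q M k t1 else Gmap m q M (k - q) t2) y = a"
  proof (cases "if a = 1 then 0 < t1 else t1 < q")
    case True
    then show ?thesis using Gmap_attains[OF t(1) a] by fastforce
  next
    case False
    then have "if a = 1 then 0 < t2 else t2 < q" using a t nontrivial by auto
    then obtain i y where "i \<in> {1..q}" "y \<in> hverts m q" "Gmap m q M i t2 y = a"
      using Gmap_attains[OF t(2) a] by blast
    then show ?thesis by (intro bexI[where x = "i + q"]) auto
  qed
qed (use Gmap_in_12 in auto)

end

theorem proposition9:
  fixes q m :: nat and M :: "nat \<Rightarrow> nat list set"
  assumes q2: "q \<ge> 2"
    and part: "1 \<le> m \<Longrightarrow> mds2_partition m q M"
  shows
    "(\<forall>n f S \<alpha> \<alpha>' \<beta> \<gamma> \<delta>.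
        perfect_coloring n q (q + 1) f S \<and>
        (\<forall>i\<in>{1..q}. S i i = \<alpha>') \<and>
        (\<forall>i\<in>{1..q}. \<forall>j\<in>{1..q}. i \<noteq> j \<longrightarrow> S i j = \<alpha>) \<and>
        (\<forall>i\<in>{1..q}. S i (q + 1) = \<beta>) \<and>
        (\<forall>j\<in>{1..q}. S (q + 1) j = \<gamma>) \<and>
        S (q + 1) (q + 1) = \<delta> \<and>
        \<gamma> = \<alpha> + m
      \<longrightarrow> (\<forall>t l. t \<le> q \<and> l \<in> {1, 2} \<and> t * (l - 1) + (q - t) * (2 - l) \<noteq> 0 \<longrightarrow>
             bc_coloring (n + m) q
               (invasion n f (\<lambda>k. if k \<le> q then Gmap m q M k t else (\<lambda>y. l)))
               (\<gamma> * (q - t) + \<beta> * (l - 1)) (\<gamma> * t + \<beta> * (2 - l))))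
     \<and>
     (\<forall>n f S \<alpha> \<beta> \<gamma> \<delta>.
        perfect_coloring n q (2 * q) f S \<and>
        (\<forall>i\<in>{1..2*q}. \<forall>j\<in>{1..2*q}.
           S i j = (if i \<le> q then (if j \<le> q then \<alpha> else \<beta>)
                    else (if j \<le> q then \<gamma> else \<delta>))) \<and>
        \<gamma> = \<alpha> + m \<and> \<beta> = \<delta> + m
      \<longrightarrow> (\<forall>t1 t2. t1 \<le> q \<and> t2 \<le> q \<and> t1 + t2 \<noteq> 0 \<and> t1 + t2 \<noteq> 2 * q \<longrightarrow>
             bc_coloring (n + m) q
               (invasion n f (\<lambda>k. if k \<le> q then Gmap m q M k t1 else Gmap m q M (k - q) t2))
               (q * (\<gamma> + \<beta>) - \<gamma> * t1 - \<beta> * t2) (\<gamma> * t1 + \<beta> * t2)))"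
  by (intro conjI allI impI; elim conjE;
      rule bc_coloring_invasion_q_plus_1[OF q2 part] bc_coloring_invasion_2q[OF q2 part]; assumption)

end
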